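(* In the setting of the context, with $S(t)=\tilde S e^{(\beta/\gamma)\tilde R}\varphi^{-1}(t)$ for $t\ge0$, we have \[ S(\infty):=\lim_{t\to\infty}S(t)=\tilde S e^{(\beta/\gamma)\tilde R}e^{-(\beta/\gamma)R(\infty)}, \] where $R(\infty):=\lim_{t\to\infty}\bigl(-\frac{\gamma}{\beta}\log\varphi^{-1}(t)\bigr)$, and $S$ is decreasing on $[0,\infty)$ with \[ \tilde S\ge S(t)>\tilde S e^{(\beta/\gamma)\tilde R}e^{-(\beta/\gamma)\alpha}=S(\infty)\quad(t\ge 0). \]
   Context: Let $\beta,\gamma,\delta>0$ be constants and $\tilde S,\tilde E,\tilde I,\tilde R$ real numbers with $N:=\tilde S+\tilde E+\tilde I+\tilde R>0$. Standing assumptions: (A1) $\tilde I>0$; (A2) $\tilde E>(\gamma/\delta)\tilde I$; (A3) $\tilde S>\delta\tilde E/(\beta\tilde I)$; (A4) $\tilde R\ge 0$ and $N>\tilde S e^{(\beta/\gamma)\tilde R}+\tilde R$. Let $\alpha$ be the unique solution in $(\tilde R,N)$ of $x=N-\tilde S e^{(\beta/\gamma)\tilde R}e^{-(\beta/\gamma)x}$, and assume (A5) $\tilde S<(\gamma/\beta)e^{(\beta/\gamma)(\alpha-\tilde R)}$. Put $u_0:=e^{-(\beta/\gamma)\tilde R}$, $u_\infty:=e^{-(\beta/\gamma)\alpha}$. Let $\psi$ be the unique function, continuous and positive on $(u_\infty,u_0]$ and $C^1$ on $(u_\infty,u_0)$, satisfying $\psi'(u)\psi(u)-\frac{\gamma+\delta}{u}\psi(u)=-\delta\,\frac{\beta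 N-\beta\tilde S e^{(\beta/\gamma)\tilde R}u+\gamma\log u}{u}$ on $(u_\infty,u_0)$ and $\psi(u_0)=\beta\tilde I$. Let $\varphi(u):=\int_u^{u_0}\frac{d\xi}{\xi\psi(\xi)}$; $\varphi$ is a strictly decreasing continuous bijection from $(u_\infty,u_0]$ onto $[0,\infty)$, with inverse $\varphi^{-1}:[0,\infty)\to(u_\infty,u_0]$. *)

theory Defs
  imports "HOL-Analysis.Analysis"
begin

definition seir_phi :: "(real \<Rightarrow> real) \<Rightarrow> real \<Rightarrow> real \<Rightarrow> real" where
  "seir_phi \<psi> u0 u = integral {u..u0} (\<lambda>\<xi>. 1 / (\<xi> * \<psi> \<xi>))"

definition seir_phi_inv :: "(real \<Rightarrow> real) \<Rightarrow> real \<Rightarrow> real \<Rightarrow> real \<Rightarrow> real" where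
  "seir_phi_inv \<psi> uinf u0 t = the_inv_into {uinf<..u0} (seir_phi \<psi> u0) t"

end

theory Submission
  imports Defs
begin

text \<open>The inverse of the strictly decreasing bijection \<open>\<phi> : (u\<^sub>\<infinity>, u\<^sub>0] \<rightarrow> [0, \<infinity>)\<close>
  strictly decreases from \<open>u\<^sub>0\<close> towards the omitted endpoint \<open>u\<^sub>\<infinity>\<close>. Hence \<open>S\<close>, a positive
  multiple of \<open>\<phi>\<^sup>-\<^sup>1\<close>, decreases from its initial value towards a limit it never attains,
  and \<open>R = -(\<gamma>/\<beta>) log \<phi>\<^sup>-\<^sup>1\<close> tends to \<open>-(\<gamma>/\<beta>) log u\<^sub>\<infinity> = \<alpha>\<close>. Only these
  properties of \<open>\<phi>\<close> and the positivity of the initial data enter; the ODE for \<open>\<psi>\<close> does not.\<close>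

lemma the_inv_into_mem_bij_betw:
  assumes "bij_betw f A B" "t \<in> B"
  shows "the_inv_into A f t \<in> A"
  using assms by (auto simp: bij_betw_def intro: the_inv_into_into)

lemma strict_antimono_the_inv_into:
  fixes f :: "'a::linorder \<Rightarrow> 'b::linorder"
  assumes bij: "bij_betw f A B" and decr: "strict_antimono_on A f"
    and s: "s \<in> B" and t: "t \<in> B" and "s < t"
  shows "the_inv_into A f t < the_inv_into A f s"
proof -
  let ?g = "the_inv_into A f"
  have gs: "?g s \<in> A" and gt: "?g t \<in> A"
    using the_inv_into_mem_bij_betw[OF bij] s t by simp_all
  have fs: "f (?g s) = s" and ft: "f (?g t) = t"
    using f_the_inv_into_f[OF bij_betw_imp_inj_on[OF bij]] bij_betw_imp_surj_on[OF bij] s t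
    by simp_all
  have "?g s \<noteq> ?g t"
  proof
    assume "?g s = ?g t"
    then have "s = t" by (metis fs ft)
    with \<open>s < t\<close> show False by simp
  qed
  moreover have "\<not> ?g s < ?g t"
  proof
    assume "?g s < ?g t"
    then have "f (?g t) < f (?g s)" by (rule monotone_onD[OF decr gs gt])
    then have "t < s" by (simp only: fs ft)
    with \<open>s < t\<close> show False by simp
  qed
  ultimately show ?thesis
    using linorder_neq_iff by blast
qed

lemma tendsto_the_inv_into_at_top:
  fixes f :: "'a::linorder_topology \<Rightarrow> 'b::{linorder,no_top}"
  assumes bij: "bij_betw f {a<..b} {c..}" and decr: "strict_antimono_on {a<..b} f"
  shows "(the_inv_into {a<..b} f \<longlongrightarrow> a) at_top"
proof (rule order_tendstoI)
  let ?g = "the_inv_into {a<..b} f"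
  have g_mem: "a < ?g t" "?g t \<le> b" if "c \<le> t" for t
    using the_inv_into_mem_bij_betw[OF bij] that by auto
  show "eventually (\<lambda>t. y < ?g t) at_top" if "y < a" for y
    using eventually_ge_at_top[of c] by eventually_elim (rule less_trans[OF that g_mem(1)])
  show "eventually (\<lambda>t. ?g t < y) at_top" if "a < y" for y
  proof (cases "y \<le> b")
    case False
    then have "b < y" by simp
    show ?thesis
      using eventually_ge_at_top[of c] by eventually_elim (rule le_less_trans[OF g_mem(2) \<open>b < y\<close>])
  next
    case True
    with \<open>a < y\<close> have y: "y \<in> {a<..b}" by simp
    have fy: "f y \<in> {c..}"
      using bij_betwE[OF bij] y by blast
    have g_fy: "?g (f y) = y"
      using the_inv_into_f_f[OF bij_betw_imp_inj_on[OF bij] y] .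
    show ?thesis
      using eventually_gt_at_top[of "f y"]
    proof eventually_elim
      case (elim t)
      with fy have "?g t < ?g (f y)"
        by (intro strict_antimono_the_inv_into[OF bij decr]) auto
      then show ?case using g_fy by simp
    qed
  qed
qed

theorem theorem8:
  fixes \<beta> \<gamma> \<delta> St Et It Rt N \<alpha> u0 uinf :: real
    and \<psi> \<psi>' :: "real \<Rightarrow> real"
  assumes pos: "\<beta> > 0" "\<gamma> > 0" "\<delta> > 0"
    and N_def: "N = St + Et + It + Rt" and N_pos: "N > 0"
    and A1: "It > 0"
    and A2: "Et > (\<gamma> / \<delta>) * It"
    and A3: "St > \<delta> * Et / (\<beta> * It)"
    and A4: "Rt \<ge> 0" "N > St * exp ((\<beta> / \<gamma>) * Rt) + Rt"
    and alpha_in: "\<alpha> \<in> {Rt<..<N}"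
    and alpha_eq: "\<alpha> = N - St * exp ((\<beta> / \<gamma>) * Rt) * exp (- (\<beta> / \<gamma>) * \<alpha>)"
    and alpha_uniq: "\<And>x. x \<in> {Rt<..<N} \<Longrightarrow>
                       x = N - St * exp ((\<beta> / \<gamma>) * Rt) * exp (- (\<beta> / \<gamma>) * x) \<Longrightarrow> x = \<alpha>"
    and A5: "St < (\<gamma> / \<beta>) * exp ((\<beta> / \<gamma>) * (\<alpha> - Rt))"
    and u0_def: "u0 = exp (- (\<beta> / \<gamma>) * Rt)"
    and uinf_def: "uinf = exp (- (\<beta> / \<gamma>) * \<alpha>)"
    and psi_cont: "continuous_on {uinf<..u0} \<psi>"
    and psi_pos: "\<And>u. u \<in> {uinf<..u0} \<Longrightarrow> \<psi> u > 0"
    and psi_deriv: "\<And>u. u \<in> {uinf<..<u0} \<Longrightarrow> (\<psi> has_real_derivative \<psi>' u) (at u)"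
    and psi'_cont: "continuous_on {uinf<..<u0} \<psi>'"
    and psi_ode: "\<And>u. u \<in> {uinf<..<u0} \<Longrightarrow>
        \<psi>' u * \<psi> u - ((\<gamma> + \<delta>) / u) * \<psi> u
          = - \<delta> * (\<beta> * N - \<beta> * St * exp ((\<beta> / \<gamma>) * Rt) * u + \<gamma> * ln u) / u"
    and psi_init: "\<psi> u0 = \<beta> * It"
    and phi_bij: "bij_betw (seir_phi \<psi> u0) {uinf<..u0} {0..}"
    and phi_decr: "\<And>u v. u \<in> {uinf<..u0} \<Longrightarrow> v \<in> {uinf<..u0} \<Longrightarrow> u < v \<Longrightarrow>
                     seir_phi \<psi> u0 v < seir_phi \<psi> u0 u"
    and phi_cont: "continuous_on {uinf<..u0} (seir_phi \<psi> u0)"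
  shows "let S = (\<lambda>t. St * exp ((\<beta> / \<gamma>) * Rt) * seir_phi_inv \<psi> uinf u0 t);
             R = (\<lambda>t. - (\<gamma> / \<beta>) * ln (seir_phi_inv \<psi> uinf u0 t))
         in (\<exists>Rinf Sinf.
               (R \<longlongrightarrow> Rinf) at_top \<and> (S \<longlongrightarrow> Sinf) at_top
             \<and> Sinf = St * exp ((\<beta> / \<gamma>) * Rt) * exp (- (\<beta> / \<gamma>) * Rinf)
             \<and> (\<forall>s t. 0 \<le> s \<longrightarrow> s < t \<longrightarrow> S t < S s)
             \<and> (\<forall>t\<ge>0. St \<ge> S t \<and> S t > St * exp ((\<beta> / \<gamma>) * Rt) * exp (- (\<beta> / \<gamma>) * \<alpha>))
             \<and> St * exp ((\<beta> / \<gamma>) * Rt) * exp (- (\<beta> / \<gamma>) * \<alpha>) = Sinf)"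
proof -
  define g where "g = seir_phi_inv \<psi> uinf u0"
  define c where "c = St * exp ((\<beta> / \<gamma>) * Rt)"
  have g_eq: "g = the_inv_into {uinf<..u0} (seir_phi \<psi> u0)"
    by (simp add: g_def seir_phi_inv_def fun_eq_iff)
  have decr: "strict_antimono_on {uinf<..u0} (seir_phi \<psi> u0)"
    using phi_decr by (simp add: monotone_on_def)
  have g_mem: "g t \<in> {uinf<..u0}" if "0 \<le> t" for t
    unfolding g_eq using the_inv_into_mem_bij_betw[OF phi_bij] that by simp
  have g_decr: "g t < g s" if "0 \<le> s" "s < t" for s t
    unfolding g_eq using strict_antimono_the_inv_into[OF phi_bij decr] that by simp
  have g_lim: "(g \<longlongrightarrow> uinf) at_top"
    unfolding g_eq by (rule tendsto_the_inv_into_at_top[OF phi_bij decr])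
  have "(\<gamma> / \<delta>) * It > 0" using A1 pos by simp
  then have "Et > 0" using A2 by linarith
  then have "\<delta> * Et / (\<beta> * It) > 0" using A1 pos by simp
  then have "St > 0" using A3 by linarith
  then have c_pos: "c > 0" by (simp add: c_def)
  have c_u0: "c * u0 = St"
    by (simp add: c_def u0_def mult.assoc flip: exp_add)
  have R_lim: "((\<lambda>t. - (\<gamma> / \<beta>) * ln (g t)) \<longlongrightarrow> \<alpha>) at_top"
  proof -
    have "((\<lambda>t. - (\<gamma> / \<beta>) * ln (g t)) \<longlongrightarrow> - (\<gamma> / \<beta>) * ln uinf) at_top"
      by (intro tendsto_intros g_lim) (simp add: uinf_def)
    then show ?thesis using pos by (simp add: uinf_def)
  qed
  show ?thesis
    unfolding Let_def g_def[symmetric] c_def[symmetric]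
  proof (rule exI[of _ \<alpha>], rule exI[of _ "c * uinf"], intro conjI allI impI)
    show "((\<lambda>t. - (\<gamma> / \<beta>) * ln (g t)) \<longlongrightarrow> \<alpha>) at_top" by (rule R_lim)
    show "((\<lambda>t. c * g t) \<longlongrightarrow> c * uinf) at_top" by (intro tendsto_intros g_lim)
    show "c * uinf = c * exp (- (\<beta> / \<gamma>) * \<alpha>)" "c * exp (- (\<beta> / \<gamma>) * \<alpha>) = c * uinf"
      by (simp_all add: uinf_def)
    show "c * g t < c * g s" if "0 \<le> s" "s < t" for s t using g_decr[OF that] c_pos by simp
    fix t :: real assume "0 \<le> t"
    then have "uinf < g t" "g t \<le> u0" using g_mem by auto
    then have "c * g t \<le> c * u0" using c_pos by simp
    then show "c * g t \<le> St" using c_u0 by simp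
    show "c * exp (- (\<beta> / \<gamma>) * \<alpha>) < c * g t"
      using \<open>uinf < g t\<close> c_pos by (simp add: uinf_def)
  qed
qed

end
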